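(* Let $N\ge 1$, $B\in\mathbb{R}$, and for $i=1,\dots,N$ let $D_i>0$, $b_i>0$, $a_i\in\mathbb{R}$. For $q\in(0,1)$ define $c_i(q):=-\dfrac{a_i}{b_i}-\dfrac{1}{b_i}\big[\ln(1-q)-\ln q\big]$, and for $\bm q=(q_1,\dots,q_N)\in(0,1)^N$ define $$g(\bm q):=\sum_{i=1}^N D_i q_i\,c_i(q_i)-B.$$ Then $g$ is strongly convex on $(0,1)^N$.
   Context: $c_i(q)$ is the inverse of the logit market-share function $q_i(c)=1/(1+\exp\{-(a_i+b_ic)\})$, mapping a market share $q$ to the marketing cost achieving it; $g$ is the budget-constraint function (total cost minus budget $B$). *)

theory Defs
  imports "HOL-Analysis.Analysis"
begin

definition strongly_convex_on :: "'a::real_normed_vector set \<Rightarrow> ('a \<Rightarrow> real) \<Rightarrow> bool" where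
  "strongly_convex_on S f \<longleftrightarrow> convex S \<and> (\<exists>\<mu>>0. \<forall>x\<in>S. \<forall>y\<in>S. \<forall>t\<in>{0..1}.
     f ((1 - t) *\<^sub>R x + t *\<^sub>R y) \<le> (1 - t) * f x + t * f y - \<mu> / 2 * t * (1 - t) * (norm (x - y))\<^sup>2)"

definition cost :: "real \<Rightarrow> real \<Rightarrow> real \<Rightarrow> real" where
  "cost a b q = - a / b - (1 / b) * (ln (1 - q) - ln q)"

text \<open>Budget-constraint function g(q) = sum_i D_i q_i c_i(q_i) - B, indices = the finite type 'n (N = CARD('n)).\<close>
definition gfun :: "('n::finite \<Rightarrow> real) \<Rightarrow> ('n \<Rightarrow> real) \<Rightarrow> ('n \<Rightarrow> real) \<Rightarrow> real \<Rightarrow> real ^ 'n \<Rightarrow> real" where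
  "gfun D a b B q = (\<Sum>i\<in>UNIV. D i * q $ i * cost (a i) (b i) (q $ i)) - B"

definition open_unit_cube :: "(real ^ 'n) set" where
  "open_unit_cube = {q. \<forall>i. 0 < q $ i \<and> q $ i < 1}"

end

theory Submission
  imports Defs
begin

text \<open>The summand \<open>q \<mapsto> D q c(q)\<close> has second derivative
  \<open>(D/b) (1/(q(1-q)) + 1/(1-q)\<^sup>2) \<ge> 4D/b\<close> on \<open>(0,1)\<close>, so each summand is strongly convex
  in one variable. Since \<open>g\<close> is separable, its strong convexity on the cube follows
  coordinatewise with the smallest of the moduli \<open>4 D\<^sub>i / b\<^sub>i\<close>.\<close>

lemma norm_convex_combination_sq:
  fixes x y :: "'a::real_inner"
  shows "(norm ((1 - t) *\<^sub>R x + t *\<^sub>R y))\<^sup>2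
    = (1 - t) * (norm x)\<^sup>2 + t * (norm y)\<^sup>2 - t * (1 - t) * (norm (x - y))\<^sup>2"
  by (simp add: power2_norm_eq_inner inner_diff inner_add inner_commute algebra_simps)

lemma strongly_convex_onI_convex_on_diff_sq_norm:
  fixes f :: "'a::real_inner \<Rightarrow> real"
  assumes "convex S" and "\<mu> > 0" and "convex_on S (\<lambda>x. f x - \<mu> / 2 * (norm x)\<^sup>2)"
  shows "strongly_convex_on S f"
  unfolding strongly_convex_on_def
proof (intro conjI exI[of _ \<mu>] ballI \<open>convex S\<close> \<open>\<mu> > 0\<close>)
  fix x y and t :: real
  assume "x \<in> S" "y \<in> S" "t \<in> {0..1}"
  then have "f ((1 - t) *\<^sub>R x + t *\<^sub>R y) - \<mu> / 2 * (norm ((1 - t) *\<^sub>R x + t *\<^sub>R y))\<^sup>2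
      \<le> (1 - t) * (f x - \<mu> / 2 * (norm x)\<^sup>2) + t * (f y - \<mu> / 2 * (norm y)\<^sup>2)"
    using convex_onD[OF assms(3)] by simp
  then show "f ((1 - t) *\<^sub>R x + t *\<^sub>R y)
      \<le> (1 - t) * f x + t * f y - \<mu> / 2 * t * (1 - t) * (norm (x - y))\<^sup>2"
    unfolding norm_convex_combination_sq by (simp add: field_simps)
qed

lemma strongly_convex_on_second_derivative_ge:
  fixes f f' f'' :: "real \<Rightarrow> real"
  assumes "convex S" and "\<mu> > 0"
    and "\<And>x. x \<in> S \<Longrightarrow> (f has_real_derivative f' x) (at x)"
    and "\<And>x. x \<in> S \<Longrightarrow> (f' has_real_derivative f'' x) (at x)"
    and "\<And>x. x \<in> S \<Longrightarrow> \<mu> \<le> f'' x"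
  shows "strongly_convex_on S f"
proof (rule strongly_convex_onI_convex_on_diff_sq_norm[OF assms(1,2)])
  show "convex_on S (\<lambda>x. f x - \<mu> / 2 * (norm x)\<^sup>2)"
  proof (rule f''_ge0_imp_convex[where f' = "\<lambda>x. f' x - \<mu> * x" and f'' = "\<lambda>x. f'' x - \<mu>"])
    fix x assume x: "x \<in> S"
    show "((\<lambda>x. f x - \<mu> / 2 * (norm x)\<^sup>2) has_real_derivative f' x - \<mu> * x) (at x)"
      using assms(3)[OF x] by (auto intro!: derivative_eq_intros)
    show "((\<lambda>x. f' x - \<mu> * x) has_real_derivative f'' x - \<mu>) (at x)"
      using assms(4)[OF x] by (auto intro!: derivative_eq_intros)
    show "0 \<le> f'' x - \<mu>"
      using assms(5)[OF x] by simp
  qed (fact assms(1))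
qed

lemma strongly_convex_on_diff_const:
  assumes "strongly_convex_on S f"
  shows "strongly_convex_on S (\<lambda>x. f x - c)"
  using assms unfolding strongly_convex_on_def by (simp add: algebra_simps)

lemma strongly_convex_on_common_modulus:
  fixes f :: "'i::finite \<Rightarrow> 'a::real_normed_vector \<Rightarrow> real"
  assumes "\<And>i. strongly_convex_on (S i) (f i)"
  obtains m where "m > 0"
    and "\<And>i x y t. x \<in> S i \<Longrightarrow> y \<in> S i \<Longrightarrow> t \<in> {0..1} \<Longrightarrow>
      f i ((1 - t) *\<^sub>R x + t *\<^sub>R y) \<le> (1 - t) * f i x + t * f i y - m / 2 * t * (1 - t) * (norm (x - y))\<^sup>2"
proof -
  have "\<forall>i. \<exists>\<mu>>0. \<forall>x\<in>S i. \<forall>y\<in>S i. \<forall>t\<in>{0..1}.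
      f i ((1 - t) *\<^sub>R x + t *\<^sub>R y) \<le> (1 - t) * f i x + t * f i y - \<mu> / 2 * t * (1 - t) * (norm (x - y))\<^sup>2"
    using assms unfolding strongly_convex_on_def by blast
  then obtain \<mu> where \<mu>_pos: "\<And>i. \<mu> i > 0" and \<mu>_ineq: "\<And>i. \<forall>x\<in>S i. \<forall>y\<in>S i. \<forall>t\<in>{0..1}.
      f i ((1 - t) *\<^sub>R x + t *\<^sub>R y) \<le> (1 - t) * f i x + t * f i y - \<mu> i / 2 * t * (1 - t) * (norm (x - y))\<^sup>2"
    unfolding choice_iff by blast
  define m where "m = Min (range \<mu>)"
  have "m > 0"
    unfolding m_def using \<mu>_pos by (subst Min_gr_iff) auto
  moreover have "f i ((1 - t) *\<^sub>R x + t *\<^sub>R y) \<le> (1 - t) * f i x + t * f i y - m / 2 * t * (1 - t) * (norm (x - y))\<^sup>2"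
    if "x \<in> S i" "y \<in> S i" "t \<in> {0..1}" for i x y t
  proof -
    have "m \<le> \<mu> i"
      unfolding m_def by (rule Min_le) auto
    with that have "m / 2 * t * (1 - t) * (norm (x - y))\<^sup>2 \<le> \<mu> i / 2 * t * (1 - t) * (norm (x - y))\<^sup>2"
      by (intro mult_right_mono) auto
    with \<mu>_ineq[of i] that show ?thesis
      by fastforce
  qed
  ultimately show ?thesis
    using that by blast
qed

lemma strongly_convex_on_sum_coordinates:
  fixes f :: "'n::finite \<Rightarrow> real \<Rightarrow> real" and S :: "'n \<Rightarrow> real set"
  assumes "\<And>i. strongly_convex_on (S i) (f i)"
  shows "strongly_convex_on {x::real ^ 'n. \<forall>i. x $ i \<in> S i} (\<lambda>x. \<Sum>i\<in>UNIV. f i (x $ i))"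
proof -
  obtain m where "m > 0" and common: "\<And>i u v t. u \<in> S i \<Longrightarrow> v \<in> S i \<Longrightarrow> t \<in> {0..1} \<Longrightarrow>
      f i ((1 - t) *\<^sub>R u + t *\<^sub>R v) \<le> (1 - t) * f i u + t * f i v - m / 2 * t * (1 - t) * (norm (u - v))\<^sup>2"
    using strongly_convex_on_common_modulus[of S f] assms by blast
  have coordinate: "f i ((1 - t) * u + t * v) \<le> (1 - t) * f i u + t * f i v - m / 2 * t * (1 - t) * (u - v)\<^sup>2"
    if "u \<in> S i" "v \<in> S i" "t \<in> {0..1}" for i u v t
    using common[OF that] by simp
  have "convex {x::real ^ 'n. \<forall>i. x $ i \<in> S i}"
    using assms by (intro convex_box_cart) (simp add: strongly_convex_on_def)
  then show ?thesis
    unfolding strongly_convex_on_def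
  proof (intro conjI exI[of _ m] \<open>m > 0\<close> ballI)
    fix x y :: "real ^ 'n" and t :: real
    assume "x \<in> {x. \<forall>i. x $ i \<in> S i}" "y \<in> {x. \<forall>i. x $ i \<in> S i}" "t \<in> {0..1}"
    then have "(\<Sum>i\<in>UNIV. f i ((1 - t) * x $ i + t * y $ i))
        \<le> (\<Sum>i\<in>UNIV. (1 - t) * f i (x $ i) + t * f i (y $ i) - m / 2 * t * (1 - t) * (x $ i - y $ i)\<^sup>2)"
      by (intro sum_mono coordinate) auto
    moreover have "(norm (x - y))\<^sup>2 = (\<Sum>i\<in>UNIV. (x $ i - y $ i)\<^sup>2)"
      unfolding power2_norm_eq_inner inner_vec_def by (simp add: power2_eq_square)
    ultimately show "(\<Sum>i\<in>UNIV. f i (((1 - t) *\<^sub>R x + t *\<^sub>R y) $ i))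
        \<le> (1 - t) * (\<Sum>i\<in>UNIV. f i (x $ i)) + t * (\<Sum>i\<in>UNIV. f i (y $ i)) - m / 2 * t * (1 - t) * (norm (x - y))\<^sup>2"
      by (simp add: sum.distrib sum_subtractf sum_distrib_left)
  qed
qed

lemma four_le_inverse_mult_one_minus:
  fixes q :: real
  assumes "0 < q" "q < 1"
  shows "4 \<le> 1 / (q * (1 - q))"
proof -
  have "q * (1 - q) = 1 / 4 - (q - 1 / 2)\<^sup>2"
    by (simp add: power2_eq_square field_simps)
  then have "q * (1 - q) \<le> 1 / 4"
    by simp
  with assms show ?thesis
    by (simp add: field_simps)
qed

lemma cost_has_real_derivative:
  assumes "0 < q" "q < 1" "b \<noteq> 0"
  shows "(cost a b has_real_derivative 1 / (b * (q * (1 - q)))) (at q)"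
  unfolding cost_def[abs_def] using assms
  by (auto intro!: derivative_eq_intros simp: field_simps)

lemma strongly_convex_on_mult_cost:
  fixes D a b :: real
  assumes "D > 0" "b > 0"
  shows "strongly_convex_on {0<..<1} (\<lambda>q. D * q * cost a b q)"
proof (rule strongly_convex_on_second_derivative_ge
    [where \<mu> = "4 * D / b"
      and f' = "\<lambda>q. D * cost a b q + D / b * (1 / (1 - q))"
      and f'' = "\<lambda>q. D / b * (1 / (q * (1 - q)) + 1 / (1 - q)\<^sup>2)"])
  fix q :: real assume "q \<in> {0<..<1}"
  then have q: "0 < q" "q < 1" by auto
  have cost': "(cost a b has_real_derivative 1 / (b * (q * (1 - q)))) (at q)"
    using q assms by (intro cost_has_real_derivative) auto
  show "((\<lambda>q. D * q * cost a b q) has_real_derivative D * cost a b q + D / b * (1 / (1 - q))) (at q)"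
    using q assms by (auto intro!: derivative_eq_intros cost' simp: field_simps)
  have inverse': "((\<lambda>q. 1 / (1 - q)) has_real_derivative 1 / (1 - q)\<^sup>2) (at q)"
    using q by (auto intro!: derivative_eq_intros simp: power2_eq_square field_simps)
  have "((\<lambda>q. D * cost a b q + D / b * (1 / (1 - q))) has_real_derivative
      D * (1 / (b * (q * (1 - q)))) + D / b * (1 / (1 - q)\<^sup>2)) (at q)"
    by (intro DERIV_add DERIV_cmult cost' inverse')
  then show "((\<lambda>q. D * cost a b q + D / b * (1 / (1 - q))) has_real_derivative
      D / b * (1 / (q * (1 - q)) + 1 / (1 - q)\<^sup>2)) (at q)"
    by (simp add: distrib_left)
  have "4 \<le> 1 / (q * (1 - q)) + 1 / (1 - q)\<^sup>2"
    using four_le_inverse_mult_one_minus[OF q] q by (simp add: add_increasing2)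
  then have "D / b * 4 \<le> D / b * (1 / (q * (1 - q)) + 1 / (1 - q)\<^sup>2)"
    using assms by (intro mult_left_mono) auto
  then show "4 * D / b \<le> D / b * (1 / (q * (1 - q)) + 1 / (1 - q)\<^sup>2)"
    by (simp add: mult.commute)
qed (use assms in auto)

theorem theorem2:
  fixes D a b :: "'n::finite \<Rightarrow> real" and B :: real
  assumes "\<forall>i. D i > 0" and "\<forall>i. b i > 0"
  shows "strongly_convex_on (open_unit_cube :: (real ^ 'n) set) (gfun D a b B)"
proof -
  have "open_unit_cube = {q::real ^ 'n. \<forall>i. q $ i \<in> {0<..<1}}"
    by (simp add: open_unit_cube_def)
  moreover have "gfun D a b B = (\<lambda>q. (\<Sum>i\<in>UNIV. D i * q $ i * cost (a i) (b i) (q $ i)) - B)"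
    by (simp add: gfun_def fun_eq_iff)
  moreover have "strongly_convex_on {q::real ^ 'n. \<forall>i. q $ i \<in> {0<..<1}}
      (\<lambda>q. \<Sum>i\<in>UNIV. D i * q $ i * cost (a i) (b i) (q $ i))"
    using assms by (intro strongly_convex_on_sum_coordinates strongly_convex_on_mult_cost) auto
  ultimately show ?thesis
    by (simp add: strongly_convex_on_diff_const)
qed

end
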